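(* For any graph function $\alpha$ on a strongly connected digraph $G$ with $n$ vertices, we have $h\le(n-1)\sum_v\rho^R_v$, where $h=\max_v y_v-\min_v y_v$.
   Context: $G$ is a strongly connected directed graph on vertex set $\{1,\dots,n\}$ (self-loops allowed); a graph function assigns a real weight $\alpha_{uv}$ to each edge. $\alpha_v^{\text{in}}=\max_{u:(u,v)\in G}\alpha_{uv}$, $\alpha_v^{\text{out}}=\max_{w:(v,w)\in G}\alpha_{vw}$, $\rho^R_v=\max\{0,\alpha_v^{\text{out}}-\alpha_v^{\text{in}}\}$. A raising operation at $v$: if $\rho^R_v>0$ add $\rho^R_v/2$ to each incoming edge weight $\alpha_{uv}$ ($u\ne v$) and subtract it from each outgoing $\alpha_{vw}$ ($w\neq v$); otherwise do nothing. Starting from $\alpha$, for any infinite sequence of raising operations in which every vertex occurs infinitely often, the cumulative amount $r_v(t)$ by which each vertex has been raised (sum of the increments $\rho^R_v/2$ over operations at $v$) converges to a limit vector $r^*$ that does not depend on the sequence. The heights are $y_v=-r^*_v$. *)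

theory Defs
  imports Complex_Main
begin

text \<open>A digraph on vertex set {1..n} is an edge set E of pairs; a graph function
  is a weight function alpha on pairs (only values on edges of E matter).\<close>

definition strongly_connected :: "nat \<Rightarrow> (nat \<times> nat) set \<Rightarrow> bool" where
  "strongly_connected n E \<longleftrightarrow> E \<subseteq> {1..n} \<times> {1..n} \<and>
     (\<forall>u\<in>{1..n}. \<forall>v\<in>{1..n}. (u, v) \<in> E\<^sup>*)"

definition alpha_in :: "(nat \<times> nat) set \<Rightarrow> (nat \<Rightarrow> nat \<Rightarrow> real) \<Rightarrow> nat \<Rightarrow> real" where
  "alpha_in E \<alpha> v = Max {\<alpha> u v | u. (u, v) \<in> E}"

definition alpha_out :: "(nat \<times> nat) set \<Rightarrow> (nat \<Rightarrow> nat \<Rightarrow> real) \<Rightarrow> nat \<Rightarrow> real" where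
  "alpha_out E \<alpha> v = Max {\<alpha> v w | w. (v, w) \<in> E}"

definition rhoR :: "(nat \<times> nat) set \<Rightarrow> (nat \<Rightarrow> nat \<Rightarrow> real) \<Rightarrow> nat \<Rightarrow> real" where
  "rhoR E \<alpha> v = max 0 (alpha_out E \<alpha> v - alpha_in E \<alpha> v)"

definition raise_op :: "(nat \<times> nat) set \<Rightarrow> (nat \<Rightarrow> nat \<Rightarrow> real) \<Rightarrow> nat \<Rightarrow> (nat \<Rightarrow> nat \<Rightarrow> real)" where
  "raise_op E \<alpha> v = (\<lambda>a b.
     if (a, b) \<in> E \<and> b = v \<and> a \<noteq> v then \<alpha> a b + rhoR E \<alpha> v / 2
     else if (a, b) \<in> E \<and> a = v \<and> b \<noteq> v then \<alpha> a b - rhoR E \<alpha> v / 2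
     else \<alpha> a b)"

fun alpha_seq :: "(nat \<times> nat) set \<Rightarrow> (nat \<Rightarrow> nat \<Rightarrow> real) \<Rightarrow> (nat \<Rightarrow> nat) \<Rightarrow> nat \<Rightarrow> (nat \<Rightarrow> nat \<Rightarrow> real)" where
  "alpha_seq E \<alpha> s 0 = \<alpha>"
| "alpha_seq E \<alpha> s (Suc t) = raise_op E (alpha_seq E \<alpha> s t) (s t)"

definition raised :: "(nat \<times> nat) set \<Rightarrow> (nat \<Rightarrow> nat \<Rightarrow> real) \<Rightarrow> (nat \<Rightarrow> nat) \<Rightarrow> nat \<Rightarrow> nat \<Rightarrow> real" where
  "raised E \<alpha> s v t = (\<Sum>i<t. if s i = v then rhoR E (alpha_seq E \<alpha> s i) v / 2 else 0)"

end

theory Submission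
  imports Defs "HOL-Library.Infinite_Set"
begin

(* Reweight \<alpha> by a potential x as \<alpha> u v + x v - x u. The limit r* is the least nonnegative
   potential at which every vertex is settled (largest reweighted out-weight at most the largest
   reweighted in-weight): raising never overshoots such a potential, and a vertex that is raised
   infinitely often cannot stay unsettled in the limit. By minimality, no nonempty set of vertices
   with r* > 0 that is closed under tight edges can be lowered, and every vertex with r* > 0 is tight.

   Let U be the vertices lying above a gap of size g in the values of r*, and \<Omega> the largest
   original out-weight in U. Lowering arguments bound every reweighted in-weight in U by \<Omega> - g.
   Walking backwards along in-maximal predecessors for \<alpha> from a vertex attaining \<Omega>, r* strictly
   increases until the original in-weight drops to \<Omega> - g; the walk visits distinct vertices and
   out-weight minus in-weight telescopes into a sum of \<rho>^R, so g \<le> \<Sum>\<rho>^R. The range of r* is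
   made of at most n - 1 such gaps. *)

lemma Max_minus_Min_le_card_mult_gap:
  fixes f :: "'a \<Rightarrow> real"
  assumes A: "finite A" "A \<noteq> {}" and B: "0 \<le> B"
    and gap: "\<And>a b. a \<in> A \<Longrightarrow> b \<in> A \<Longrightarrow> f a < f b \<Longrightarrow> (\<forall>c\<in>A. f c \<le> f a \<or> f b \<le> f c)
               \<Longrightarrow> f b - f a \<le> B"
  shows "Max (f ` A) - Min (f ` A) \<le> real (card A - 1) * B"
proof -
  let ?below = "\<lambda>x. {a\<in>A. f a < x}"
  have fin: "finite (f ` A)" "f ` A \<noteq> {}" using A by auto
  have ladder: "x - Min (f ` A) \<le> real (card (?below x)) * B" if "x \<in> f ` A" for x
    using that
  proof (induction "card (?below x)" arbitrary: x rule: less_induct)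
    case less
    show ?case
    proof (cases "?below x = {}")
      case True
      then have "Min (f ` A) = x" using less.prems fin by (intro Min_eqI) force+
      then show ?thesis using B by simp
    next
      case False
      define x' where "x' = Max (f ` ?below x)"
      have "x' \<in> f ` ?below x" unfolding x'_def using False A by (intro Max_in) auto
      then obtain a where a: "a \<in> A" "f a = x'" "x' < x" by auto
      obtain b where b: "b \<in> A" "f b = x" using less.prems by auto
      have "f c \<le> x'" if "c \<in> A" "f c < x" for c
        unfolding x'_def using that A by (intro Max_ge) auto
      then have "x - x' \<le> B" using gap[OF a(1) b(1)] a b by force
      moreover have lt: "card (?below x') < card (?below x)"
        using a A by (intro psubset_card_mono) auto
      then have "real (card (?below x')) * B \<le> (real (card (?below x)) - 1) * B"
        using B by (intro mult_right_mono) auto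
      moreover have "x' - Min (f ` A) \<le> real (card (?below x')) * B"
        using less.hyps[OF lt] a by blast
      ultimately show ?thesis by (simp add: algebra_simps)
    qed
  qed
  obtain m where m: "m \<in> A" "f m = Max (f ` A)" using Max_in[OF fin] by auto
  have "?below (f m) \<subseteq> A - {m}" by auto
  then have "card (?below (f m)) \<le> card A - 1" using A m(1) by (metis card_Diff_singleton card_mono finite_Diff)
  then have "real (card (?below (f m))) * B \<le> real (card A - 1) * B" using B by (intro mult_right_mono) auto
  moreover have "f m \<in> f ` A" using m by blast
  ultimately show ?thesis using ladder[of "f m"] m by simp
qed

lemma increasing_walk_reaches:
  fixes Y :: "nat \<Rightarrow> 'a" and f :: "'a \<Rightarrow> 'b::linorder"
  assumes U: "finite U" "Y 0 \<in> U"
    and step: "\<And>l. Y l \<in> U \<Longrightarrow> \<not> P l \<Longrightarrow> Y (Suc l) \<in> U \<and> f (Y l) < f (Y (Suc l))"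
  shows "\<exists>k. P k \<and> inj_on Y {..k} \<and> Y ` {..k} \<subseteq> U"
proof -
  have walk: "Y i \<in> U \<and> (\<forall>j<i. f (Y j) < f (Y i))" if "\<forall>l<k. \<not> P l" "i \<le> k" for i k
    using that(2)
  proof (induction i)
    case 0
    then show ?case using U by simp
  next
    case (Suc i)
    then have "Y (Suc i) \<in> U \<and> f (Y i) < f (Y (Suc i))" using step that(1) by simp
    then show ?case using Suc by (auto simp: less_Suc_eq)
  qed
  have inj: "inj_on Y {..k}" if "\<forall>l<k. \<not> P l" for k
    using walk[OF that] by (intro inj_onI) (metis atMost_iff linorder_neqE order_less_irrefl)
  have "\<exists>k. P k"
  proof (rule ccontr)
    assume "\<nexists>k. P k"
    then have "inj_on Y {..k}" and "Y k \<in> U" for k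
      using inj walk by blast+
    then have "inj Y" and "range Y \<subseteq> U"
      by (auto simp: inj_on_def) (metis atMost_iff max.cobounded1 max.cobounded2)
    then show False using U(1) by (meson finite_imageD finite_subset infinite_UNIV_nat)
  qed
  then obtain k where "P k" "\<forall>l<k. \<not> P l" by (metis exists_least_iff)
  then show ?thesis using inj walk by blast
qed

lemma ex_nonempty_subset_Image_eq:
  fixes R :: "'a rel"
  assumes "finite T" "T \<noteq> {}" "R `` T \<subseteq> T" "\<And>v. v \<in> T \<Longrightarrow> R `` {v} \<noteq> {}"
  shows "\<exists>S\<subseteq>T. S \<noteq> {} \<and> R `` S = S"
proof -
  let ?closed = "\<lambda>S. S \<subseteq> T \<and> S \<noteq> {} \<and> R `` S \<subseteq> S"
  obtain S where S: "?closed S" and min: "\<And>S'. ?closed S' \<Longrightarrow> card S \<le> card S'"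
    using ex_has_least_nat[of ?closed T card] assms by blast
  have "?closed (R `` S)" using S assms(4) by blast
  then have "card S \<le> card (R `` S)" by (rule min)
  then have "R `` S = S" using S assms(1) by (meson card_seteq finite_subset)
  then show ?thesis using S by blast
qed

(* The graph function obtained from \<alpha> once each vertex v has been raised by x v in total. *)
definition reweight :: "(nat \<Rightarrow> nat \<Rightarrow> real) \<Rightarrow> (nat \<Rightarrow> real) \<Rightarrow> nat \<Rightarrow> nat \<Rightarrow> real" where
  "reweight \<alpha> x u v = \<alpha> u v + x v - x u"

lemma rhoR_cong:
  assumes "\<And>u. (u, v) \<in> E \<Longrightarrow> \<beta> u v = \<gamma> u v" "\<And>w. (v, w) \<in> E \<Longrightarrow> \<beta> v w = \<gamma> v w"
  shows "rhoR E \<beta> v = rhoR E \<gamma> v"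
proof -
  have "{\<beta> u v | u. (u, v) \<in> E} = {\<gamma> u v | u. (u, v) \<in> E}"
    and "{\<beta> v w | w. (v, w) \<in> E} = {\<gamma> v w | w. (v, w) \<in> E}"
    using assms by (auto; metis)+
  then show ?thesis by (simp add: rhoR_def alpha_in_def alpha_out_def)
qed

locale finite_digraph =
  fixes V :: "nat set" and E :: "(nat \<times> nat) set"
  assumes finite_vertices: "finite V"
    and edges_in_vertices: "E \<subseteq> V \<times> V"
    and has_in_edge: "v \<in> V \<Longrightarrow> \<exists>u. (u, v) \<in> E"
    and has_out_edge: "v \<in> V \<Longrightarrow> \<exists>w. (v, w) \<in> E"
begin

lemma edge_vertices: "(u, v) \<in> E \<Longrightarrow> u \<in> V \<and> v \<in> V"
  using edges_in_vertices by auto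

lemma finite_edges: "finite E"
  using edges_in_vertices finite_vertices by (meson finite_SigmaI finite_subset)

lemma alpha_in_ge: "(u, v) \<in> E \<Longrightarrow> \<beta> u v \<le> alpha_in E \<beta> v"
  unfolding alpha_in_def
  by (rule Max_ge) (auto intro: finite_subset[OF _ finite_imageI[OF finite_edges, of "\<lambda>(u, v). \<beta> u v"]])

lemma alpha_out_ge: "(v, w) \<in> E \<Longrightarrow> \<beta> v w \<le> alpha_out E \<beta> v"
  unfolding alpha_out_def
  by (rule Max_ge) (auto intro: finite_subset[OF _ finite_imageI[OF finite_edges, of "\<lambda>(u, v). \<beta> u v"]])

lemma alpha_in_attained:
  assumes "v \<in> V" obtains u where "(u, v) \<in> E" "alpha_in E \<beta> v = \<beta> u v"
proof -
  have "alpha_in E \<beta> v \<in> {\<beta> u v | u. (u, v) \<in> E}"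
    unfolding alpha_in_def using has_in_edge[OF assms]
    by (intro Max_in) (auto intro: finite_subset[OF _ finite_imageI[OF finite_edges, of "\<lambda>(u, v). \<beta> u v"]])
  then show ?thesis using that by blast
qed

lemma alpha_out_attained:
  assumes "v \<in> V" obtains w where "(v, w) \<in> E" "alpha_out E \<beta> v = \<beta> v w"
proof -
  have "alpha_out E \<beta> v \<in> {\<beta> v w | w. (v, w) \<in> E}"
    unfolding alpha_out_def using has_out_edge[OF assms]
    by (intro Max_in) (auto intro: finite_subset[OF _ finite_imageI[OF finite_edges, of "\<lambda>(u, v). \<beta> u v"]])
  then show ?thesis using that by blast
qed

lemma alpha_in_le_add:
  assumes "v \<in> V" "\<And>u. (u, v) \<in> E \<Longrightarrow> \<beta> u v \<le> \<gamma> u v + D"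
  shows "alpha_in E \<beta> v \<le> alpha_in E \<gamma> v + D"
  by (metis alpha_in_attained[OF assms(1)] alpha_in_ge add_right_mono assms(2) order_trans)

lemma alpha_out_le_add:
  assumes "v \<in> V" "\<And>w. (v, w) \<in> E \<Longrightarrow> \<beta> v w \<le> \<gamma> v w + D"
  shows "alpha_out E \<beta> v \<le> alpha_out E \<gamma> v + D"
  by (metis alpha_out_attained[OF assms(1)] alpha_out_ge add_right_mono assms(2) order_trans)

lemma in_argmax_choice: "\<exists>\<pi>. \<forall>v\<in>V. (\<pi> v, v) \<in> E \<and> \<beta> (\<pi> v) v = alpha_in E \<beta> v"
  by (rule bchoice) (metis alpha_in_attained)

lemma rhoR_reweight_le:
  assumes v: "v \<in> V" and le: "\<forall>w\<in>V. x w \<le> q w"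
    and settled: "alpha_out E (reweight \<alpha> q) v \<le> alpha_in E (reweight \<alpha> q) v"
  shows "rhoR E (reweight \<alpha> x) v \<le> 2 * (q v - x v)"
proof -
  have "alpha_out E (reweight \<alpha> x) v \<le> alpha_out E (reweight \<alpha> q) v + (q v - x v)"
    using le edge_vertices by (intro alpha_out_le_add[OF v]) (fastforce simp: reweight_def)
  moreover have "alpha_in E (reweight \<alpha> q) v \<le> alpha_in E (reweight \<alpha> x) v + (q v - x v)"
    using le edge_vertices by (intro alpha_in_le_add[OF v]) (fastforce simp: reweight_def)
  ultimately show ?thesis using settled le v by (auto simp: rhoR_def)
qed

lemma rhoR_reweight_lipschitz:
  assumes v: "v \<in> V" and close: "\<forall>w\<in>V. \<bar>x w - y w\<bar> \<le> D"
  shows "rhoR E (reweight \<alpha> y) v \<le> rhoR E (reweight \<alpha> x) v + 4 * D"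
proof -
  have D: "reweight \<alpha> x a b \<le> reweight \<alpha> y a b + 2 * D"
    "reweight \<alpha> y a b \<le> reweight \<alpha> x a b + 2 * D" if "(a, b) \<in> E" for a b
    using close edge_vertices[OF that] unfolding reweight_def
    by (smt (verit, best) abs_le_iff)+
  have "alpha_out E (reweight \<alpha> y) v \<le> alpha_out E (reweight \<alpha> x) v + 2 * D"
    using D by (intro alpha_out_le_add[OF v])
  moreover have "alpha_in E (reweight \<alpha> x) v \<le> alpha_in E (reweight \<alpha> y) v + 2 * D"
    using D by (intro alpha_in_le_add[OF v])
  moreover have "0 \<le> D" using close v by force
  ultimately show ?thesis by (auto simp: rhoR_def)
qed

lemma in_argmax_walk_sum_rhoR:
  assumes "\<forall>i<k. (Y (Suc i), Y i) \<in> E \<and> \<beta> (Y (Suc i)) (Y i) = alpha_in E \<beta> (Y i)"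
  shows "alpha_out E \<beta> (Y 0) - alpha_in E \<beta> (Y k) \<le> (\<Sum>i\<le>k. rhoR E \<beta> (Y i))"
  using assms
proof (induction k)
  case 0
  then show ?case by (simp add: rhoR_def)
next
  case (Suc k)
  then have "alpha_in E \<beta> (Y k) \<le> alpha_out E \<beta> (Y (Suc k))"
    by (metis alpha_out_ge lessI)
  moreover have "alpha_out E \<beta> (Y (Suc k)) - alpha_in E \<beta> (Y (Suc k)) \<le> rhoR E \<beta> (Y (Suc k))"
    by (simp add: rhoR_def)
  ultimately show ?case using Suc by simp
qed

end

lemma finite_digraph_if_strongly_connected:
  assumes sc: "strongly_connected n E" and n: "2 \<le> n"
  shows "finite_digraph {1..n} E"
proof
  have other: "\<exists>u\<in>{1..n}. u \<noteq> v" for v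
    using n by (cases "v = 1") (auto intro: bexI[of _ 1] bexI[of _ 2])
  show "E \<subseteq> {1..n} \<times> {1..n}" using sc by (simp add: strongly_connected_def)
  fix v assume v: "v \<in> {1..n}"
  obtain u where u: "u \<in> {1..n}" "u \<noteq> v" using other by blast
  have "(u, v) \<in> E\<^sup>*" "(v, u) \<in> E\<^sup>*" using sc u v by (auto simp: strongly_connected_def)
  then show "\<exists>u. (u, v) \<in> E" "\<exists>w. (v, w) \<in> E"
    using u(2) by (auto elim: rtranclE converse_rtranclE)
qed simp

locale raising_process = finite_digraph +
  fixes \<alpha> :: "nat \<Rightarrow> nat \<Rightarrow> real" and s :: "nat \<Rightarrow> nat" and rstar :: "nat \<Rightarrow> real"
  assumes schedule_infinitely_often: "v \<in> V \<Longrightarrow> \<exists>\<^sub>\<infinity>t. s t = v"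
    and raised_tendsto: "v \<in> V \<Longrightarrow> (\<lambda>t. raised E \<alpha> s v t) \<longlonglongrightarrow> rstar v"
begin

abbreviation in_max :: "(nat \<Rightarrow> real) \<Rightarrow> nat \<Rightarrow> real" where
  "in_max x \<equiv> alpha_in E (reweight \<alpha> x)"

abbreviation out_max :: "(nat \<Rightarrow> real) \<Rightarrow> nat \<Rightarrow> real" where
  "out_max x \<equiv> alpha_out E (reweight \<alpha> x)"

definition r :: "nat \<Rightarrow> nat \<Rightarrow> real" where
  "r t v = raised E \<alpha> s v t"

lemma alpha_seq_eq_reweight: "(a, b) \<in> E \<Longrightarrow> alpha_seq E \<alpha> s t a b = reweight \<alpha> (r t) a b"
  by (induction t arbitrary: a b) (auto simp: raise_op_def r_def raised_def reweight_def)

lemma r_0: "r 0 = (\<lambda>_. 0)"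
  by (simp add: r_def raised_def fun_eq_iff)

lemma r_Suc: "r (Suc t) v = r t v + (if s t = v then rhoR E (reweight \<alpha> (r t)) v / 2 else 0)"
proof -
  have "rhoR E (alpha_seq E \<alpha> s t) v = rhoR E (reweight \<alpha> (r t)) v"
    by (intro rhoR_cong) (simp_all add: alpha_seq_eq_reweight)
  then show ?thesis by (simp add: r_def raised_def)
qed

lemma r_tendsto: "v \<in> V \<Longrightarrow> (\<lambda>t. r t v) \<longlonglongrightarrow> rstar v"
  using raised_tendsto by (simp add: r_def)

lemma r_le_rstar: "v \<in> V \<Longrightarrow> r t v \<le> rstar v"
  by (rule incseq_le[OF incseq_SucI r_tendsto]) (simp add: r_Suc rhoR_def)

lemma rstar_nonneg: "v \<in> V \<Longrightarrow> 0 \<le> rstar v"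
  using r_le_rstar[of v 0] by (simp add: r_0)

(* Raising never overshoots a settled potential q above the current one (rhoR_reweight_le). *)
lemma rstar_least:
  assumes nonneg: "\<forall>w\<in>V. 0 \<le> q w" and settled: "\<forall>w\<in>V. out_max q w \<le> in_max q w"
    and v: "v \<in> V"
  shows "rstar v \<le> q v"
proof -
  have "\<forall>w\<in>V. r t w \<le> q w" for t
  proof (induction t)
    case 0
    then show ?case using nonneg by (simp add: r_0)
  next
    case (Suc t)
    have "rhoR E (reweight \<alpha> (r t)) w \<le> 2 * (q w - r t w)" if "w \<in> V" for w
      using rhoR_reweight_le[OF that Suc] settled that by blast
    then show ?case using Suc by (fastforce simp: r_Suc)
  qed
  then show ?thesis using LIMSEQ_le_const2[OF r_tendsto[OF v]] v by blast
qed

lemma rstar_settled: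
  assumes v: "v \<in> V" shows "out_max rstar v \<le> in_max rstar v"
proof (rule ccontr)
  define \<delta> where "\<delta> = rhoR E (reweight \<alpha> rstar) v"
  assume "\<not> out_max rstar v \<le> in_max rstar v"
  then have \<delta>: "0 < \<delta>" by (simp add: \<delta>_def rhoR_def)
  have "\<forall>\<^sub>F t in sequentially. \<forall>w\<in>V. \<bar>r t w - rstar w\<bar> < \<delta> / 6"
  proof (intro eventually_ball_finite[OF finite_vertices] ballI)
    fix w assume "w \<in> V"
    then show "\<forall>\<^sub>F t in sequentially. \<bar>r t w - rstar w\<bar> < \<delta> / 6"
      using r_tendsto \<delta> unfolding tendsto_iff dist_real_def by (meson divide_pos_pos zero_less_numeral)
  qed
  then obtain N where N: "\<And>t. t \<ge> N \<Longrightarrow> \<forall>w\<in>V. \<bar>r t w - rstar w\<bar> < \<delta> / 6"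
    unfolding eventually_sequentially by blast
  obtain t where t: "t \<ge> N" "s t = v" using schedule_infinitely_often[OF v] unfolding INFM_nat_le by blast
  have "\<forall>w\<in>V. \<bar>r t w - rstar w\<bar> \<le> \<delta> / 6" using N[OF t(1)] by (simp add: less_imp_le)
  then have "\<delta> \<le> rhoR E (reweight \<alpha> (r t)) v + 4 * (\<delta> / 6)"
    using rhoR_reweight_lipschitz[OF v] \<delta>_def by blast
  moreover have "r (Suc t) v \<le> rstar v" "rstar v - r t v < \<delta> / 6"
    using r_le_rstar[OF v] N[OF t(1)] v by auto
  ultimately show False using t(2) by (simp add: r_Suc)
qed

lemma lowering_unsettles:
  assumes S: "S \<subseteq> V" "v0 \<in> S" and \<epsilon>: "0 < \<epsilon>" "\<forall>v\<in>S. \<epsilon> \<le> rstar v"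
  defines "q \<equiv> \<lambda>w. if w \<in> S then rstar w - \<epsilon> else rstar w"
  shows "\<exists>v\<in>S. in_max q v < out_max q v"
proof (rule ccontr)
  assume "\<not> (\<exists>v\<in>S. in_max q v < out_max q v)"
  then have settled_S: "\<forall>v\<in>S. out_max q v \<le> in_max q v" by auto
  have q_le: "q w \<le> rstar w" for w using \<epsilon> by (simp add: q_def)
  have "out_max q v \<le> in_max q v" if v: "v \<in> V" "v \<notin> S" for v
  proof -
    have "out_max q v \<le> out_max rstar v + 0"
      using q_le v by (intro alpha_out_le_add) (auto simp: reweight_def q_def)
    also have "\<dots> \<le> in_max rstar v" using rstar_settled v by simp
    also have "\<dots> \<le> in_max q v + 0"
      using q_le v by (intro alpha_in_le_add) (auto simp: reweight_def q_def)
    finally show ?thesis by simp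
  qed
  then have "\<forall>w\<in>V. out_max q w \<le> in_max q w" using settled_S by blast
  moreover have "\<forall>w\<in>V. 0 \<le> q w" using \<epsilon> rstar_nonneg by (simp add: q_def)
  ultimately have "rstar v0 \<le> q v0" using rstar_least S by blast
  then show False using S \<epsilon> by (simp add: q_def)
qed

lemma rstar_tight:
  assumes v: "v \<in> V" and pos: "0 < rstar v"
  shows "out_max rstar v = in_max rstar v"
proof (rule ccontr)
  assume "out_max rstar v \<noteq> in_max rstar v"
  then have lt: "out_max rstar v < in_max rstar v" using rstar_settled[OF v] by simp
  define \<epsilon> where "\<epsilon> = min (rstar v) ((in_max rstar v - out_max rstar v) / 2)"
  have \<epsilon>: "0 < \<epsilon>" using lt pos by (simp add: \<epsilon>_def)
  have \<epsilon>_half: "\<epsilon> \<le> (in_max rstar v - out_max rstar v) / 2" unfolding \<epsilon>_def by (rule min.cobounded2)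
  define q where "q = (\<lambda>w. if w \<in> {v} then rstar w - \<epsilon> else rstar w)"
  have "out_max q v \<le> out_max rstar v + \<epsilon>"
    using \<epsilon> v by (intro alpha_out_le_add) (auto simp: reweight_def q_def)
  also have "\<dots> \<le> in_max rstar v - \<epsilon>" using \<epsilon>_half by (simp add: field_simps)
  also have "\<dots> \<le> in_max q v"
    using alpha_in_le_add[OF v, of "reweight \<alpha> rstar" "reweight \<alpha> q" \<epsilon>] \<epsilon>
    by (fastforce simp: reweight_def q_def)
  finally show False
    using lowering_unsettles[of "{v}" v \<epsilon>] v \<epsilon> by (auto simp: q_def \<epsilon>_def)
qed

(* Lowering S by a small \<epsilon> keeps it settled: every vertex of S has a tight in-edge from S,
   and the edges leaving S have slack. *)
lemma no_closed_tight_set: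
  assumes S: "S \<subseteq> V" "S \<noteq> {}" "\<forall>v\<in>S. 0 < rstar v"
    and out: "\<forall>v\<in>S. out_max rstar v \<le> \<Lambda>"
    and closed: "{(v, w) \<in> E. reweight \<alpha> rstar v w = \<Lambda>} `` S = S"
  shows False
proof -
  let ?exits = "{(v, w) \<in> E. v \<in> S \<and> w \<notin> S}"
  define M where "M = rstar ` S \<union> (\<lambda>(v, w). \<Lambda> - reweight \<alpha> rstar v w) ` ?exits"
  have exit_slack: "reweight \<alpha> rstar v w < \<Lambda>" if "(v, w) \<in> ?exits" for v w
  proof -
    have "reweight \<alpha> rstar v w \<le> \<Lambda>"
      using that out alpha_out_ge[of v w "reweight \<alpha> rstar"] by fastforce
    moreover have "reweight \<alpha> rstar v w \<noteq> \<Lambda>" using that closed by blast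
    ultimately show ?thesis by simp
  qed
  have "finite M" unfolding M_def
    using S(1) finite_vertices finite_edges by (auto intro: finite_subset)
  moreover have "M \<noteq> {}" using S(2) by (simp add: M_def)
  moreover have "\<forall>x\<in>M. 0 < x" using S(3) exit_slack by (auto simp: M_def)
  ultimately have \<epsilon>: "0 < Min M" "\<forall>x\<in>M. Min M \<le> x" by auto
  define q where "q = (\<lambda>w. if w \<in> S then rstar w - Min M else rstar w)"
  have "out_max q v \<le> in_max q v" if v: "v \<in> S" for v
  proof -
    have vV: "v \<in> V" using v S(1) by blast
    obtain w where w: "(v, w) \<in> E" "out_max q v = reweight \<alpha> q v w"
      using alpha_out_attained[OF vV] by metis
    have "reweight \<alpha> q v w \<le> \<Lambda>"
    proof (cases "w \<in> S")
      case True
      then have "reweight \<alpha> q v w = reweight \<alpha> rstar v w" using v by (simp add: reweight_def q_def)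
      moreover have "reweight \<alpha> rstar v w \<le> out_max rstar v" by (rule alpha_out_ge[OF w(1)])
      moreover have "out_max rstar v \<le> \<Lambda>" using out v by blast
      ultimately show ?thesis by linarith
    next
      case False
      then have "Min M \<le> \<Lambda> - reweight \<alpha> rstar v w" using \<epsilon>(2) w(1) v by (force simp: M_def)
      then show ?thesis using False v by (simp add: reweight_def q_def)
    qed
    moreover obtain u where u: "u \<in> S" "(u, v) \<in> E" "reweight \<alpha> rstar u v = \<Lambda>"
      using v closed by blast
    then have "reweight \<alpha> q u v = \<Lambda>" using v by (simp add: reweight_def q_def)
    then have "\<Lambda> \<le> in_max q v" using alpha_in_ge[OF u(2)] by metis
    ultimately show ?thesis using w(2) by simp
  qed
  moreover obtain v0 where "v0 \<in> S" using S(2) by blast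
  ultimately show False
    using lowering_unsettles[OF S(1) _ \<epsilon>(1)] \<epsilon>(2) unfolding M_def q_def by fastforce
qed

(* Otherwise the vertices of U of maximal in-weight are tight and tight edges do not leave them,
   which yields a closed tight set. *)
lemma in_max_le_exit_bound:
  assumes U: "U \<subseteq> V" "\<forall>u\<in>U. 0 < rstar u"
    and exits: "\<And>u w. u \<in> U \<Longrightarrow> (u, w) \<in> E \<Longrightarrow> w \<notin> U \<Longrightarrow> reweight \<alpha> rstar u w \<le> K"
    and v: "v \<in> U"
  shows "in_max rstar v \<le> K"
proof (rule ccontr)
  assume v_big: "\<not> in_max rstar v \<le> K"
  have finU: "finite U" using U(1) finite_vertices by (rule finite_subset)
  define \<Lambda> where "\<Lambda> = Max (in_max rstar ` U)"
  define T where "T = {u \<in> U. in_max rstar u = \<Lambda>}"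
  define tight where "tight = {(u, w) \<in> E. reweight \<alpha> rstar u w = \<Lambda>}"
  have \<Lambda>_ge: "in_max rstar u \<le> \<Lambda>" if "u \<in> U" for u
    using that finU by (simp add: \<Lambda>_def)
  have "\<Lambda> \<in> in_max rstar ` U" unfolding \<Lambda>_def using finU v by (intro Max_in) auto
  then have "T \<noteq> {}" by (auto simp: T_def)
  have K_less: "K < \<Lambda>" using \<Lambda>_ge[OF v] v_big by simp
  have T_V: "T \<subseteq> V" using U(1) by (auto simp: T_def)
  have out_T: "out_max rstar u = \<Lambda>" if "u \<in> T" for u
    using that U rstar_tight by (auto simp: T_def)
  have "tight `` T \<subseteq> T"
  proof
    fix w assume "w \<in> tight `` T"
    then obtain u where u: "u \<in> T" "(u, w) \<in> E" "reweight \<alpha> rstar u w = \<Lambda>"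
      by (auto simp: tight_def)
    have "w \<in> U"
    proof (rule ccontr)
      assume "w \<notin> U"
      then have "reweight \<alpha> rstar u w \<le> K" using exits u(1,2) by (simp add: T_def)
      then show False using u(3) K_less by simp
    qed
    moreover have "\<Lambda> \<le> in_max rstar w"
      using alpha_in_ge[OF u(2), of "reweight \<alpha> rstar"] u(3) by simp
    ultimately show "w \<in> T" using \<Lambda>_ge[of w] by (simp add: T_def)
  qed
  moreover have "tight `` {u} \<noteq> {}" if u: "u \<in> T" for u
  proof -
    obtain w where "(u, w) \<in> E" "out_max rstar u = reweight \<alpha> rstar u w"
      using alpha_out_attained[of u] u T_V by blast
    then show ?thesis using out_T[OF u] by (auto simp: tight_def)
  qed
  moreover have "finite T" using finU by (simp add: T_def)
  ultimately obtain S where S: "S \<subseteq> T" "S \<noteq> {}" "tight `` S = S"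
    using \<open>T \<noteq> {}\<close> ex_nonempty_subset_Image_eq[of T tight] by blast
  have "S \<subseteq> V" "\<forall>u\<in>S. 0 < rstar u" "\<forall>u\<in>S. out_max rstar u \<le> \<Lambda>"
    using S(1) T_V U(2) out_T by (auto simp: T_def)
  then show False using no_closed_tight_set S(2,3) unfolding tight_def by blast
qed

lemma in_max_le_gap_bound:
  assumes U: "U \<subseteq> V" "b \<in> V - U" and g: "0 < g"
    and gap: "\<And>u w. u \<in> U \<Longrightarrow> w \<in> V - U \<Longrightarrow> rstar w + g \<le> rstar u"
    and v: "v \<in> U"
  shows "in_max rstar v \<le> Max (alpha_out E \<alpha> ` U) - g"
proof (rule in_max_le_exit_bound[OF U(1) _ _ v])
  show "\<forall>u\<in>U. 0 < rstar u" using gap[OF _ U(2)] rstar_nonneg U(2) g by force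
  fix u w assume u: "u \<in> U" and uw: "(u, w) \<in> E" "w \<notin> U"
  have "\<alpha> u w \<le> alpha_out E \<alpha> u" by (rule alpha_out_ge[OF uw(1)])
  also have "\<dots> \<le> Max (alpha_out E \<alpha> ` U)"
    using U(1) finite_vertices u by (simp add: finite_subset)
  finally show "reweight \<alpha> rstar u w \<le> Max (alpha_out E \<alpha> ` U) - g"
    using gap[OF u] uw edge_vertices by (force simp: reweight_def)
qed

lemma gap_le_sum_rhoR:
  assumes U: "U \<subseteq> V" "a \<in> U" "b \<in> V - U" and g: "0 < g"
    and gap: "\<And>u w. u \<in> U \<Longrightarrow> w \<in> V - U \<Longrightarrow> rstar w + g \<le> rstar u"
  shows "g \<le> (\<Sum>v\<in>V. rhoR E \<alpha> v)"
proof -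
  have finU: "finite U" using U(1) finite_vertices by (rule finite_subset)
  define \<Omega> where "\<Omega> = Max (alpha_out E \<alpha> ` U)"
  have "\<Omega> \<in> alpha_out E \<alpha> ` U" unfolding \<Omega>_def using finU U(2) by (intro Max_in) auto
  then obtain z where z: "z \<in> U" "alpha_out E \<alpha> z = \<Omega>" by auto
  have in_bound: "in_max rstar v \<le> \<Omega> - g" if "v \<in> U" for v
    unfolding \<Omega>_def using in_max_le_gap_bound[OF U(1,3) g gap that] by blast
  obtain \<pi> where \<pi>: "\<forall>v\<in>V. (\<pi> v, v) \<in> E \<and> \<alpha> (\<pi> v) v = alpha_in E \<alpha> v"
    using in_argmax_choice by blast
  define Y where "Y k = (\<pi> ^^ k) z" for k
  have Y_Suc: "Y (Suc k) = \<pi> (Y k)" for k by (simp add: Y_def)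
  have Y_V: "Y k \<in> V" for k
    by (induction k) (use z U(1) \<pi> edge_vertices in \<open>auto simp: Y_def\<close>)
  have Y_edge: "(Y (Suc k), Y k) \<in> E \<and> \<alpha> (Y (Suc k)) (Y k) = alpha_in E \<alpha> (Y k)" for k
    using \<pi> Y_V Y_Suc by simp
  have walk_step: "Y (Suc l) \<in> U \<and> rstar (Y l) < rstar (Y (Suc l))"
    if l: "Y l \<in> U" "\<not> alpha_in E \<alpha> (Y l) \<le> \<Omega> - g" for l
  proof -
    have "reweight \<alpha> rstar (Y (Suc l)) (Y l) \<le> \<Omega> - g"
      using alpha_in_ge[of _ "Y l"] Y_edge in_bound[OF l(1)] by (metis order_trans)
    then have less: "rstar (Y l) < rstar (Y (Suc l))" using l(2) Y_edge by (auto simp: reweight_def)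
    then have "Y (Suc l) \<in> U" using gap[OF l(1), of "Y (Suc l)"] Y_V g by force
    then show ?thesis using less by blast
  qed
  have "Y 0 \<in> U" using z(1) by (simp add: Y_def)
  then obtain k where k: "alpha_in E \<alpha> (Y k) \<le> \<Omega> - g" "inj_on Y {..k}" "Y ` {..k} \<subseteq> U"
    using increasing_walk_reaches[where P = "\<lambda>k. alpha_in E \<alpha> (Y k) \<le> \<Omega> - g" and f = rstar]
      finU walk_step by blast
  have "g \<le> alpha_out E \<alpha> (Y 0) - alpha_in E \<alpha> (Y k)" using k(1) z(2) by (simp add: Y_def)
  also have "\<dots> \<le> (\<Sum>i\<le>k. rhoR E \<alpha> (Y i))" using Y_edge by (intro in_argmax_walk_sum_rhoR) blast
  also have "\<dots> = (\<Sum>v\<in>Y ` {..k}. rhoR E \<alpha> v)" by (simp add: sum.reindex[OF k(2)])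
  also have "\<dots> \<le> (\<Sum>v\<in>V. rhoR E \<alpha> v)"
    using k(3) U(1) finite_vertices by (intro sum_mono2) (auto simp: rhoR_def)
  finally show ?thesis .
qed

lemma consecutive_rstar_gap_le_sum_rhoR:
  assumes "a \<in> V" "b \<in> V" "rstar b < rstar a" "\<forall>c\<in>V. rstar c \<le> rstar b \<or> rstar a \<le> rstar c"
  shows "rstar a - rstar b \<le> (\<Sum>v\<in>V. rhoR E \<alpha> v)"
proof (rule gap_le_sum_rhoR)
  show "{c\<in>V. rstar a \<le> rstar c} \<subseteq> V" by blast
  show "a \<in> {c\<in>V. rstar a \<le> rstar c}" using assms(1) by simp
  show "b \<in> V - {c\<in>V. rstar a \<le> rstar c}" using assms(2,3) by simp
  show "0 < rstar a - rstar b" using assms(3) by simp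
  fix u w assume "u \<in> {c\<in>V. rstar a \<le> rstar c}" "w \<in> V - {c\<in>V. rstar a \<le> rstar c}"
  then show "rstar w + (rstar a - rstar b) \<le> rstar u" using assms(4) by force
qed

end

theorem proposition3:
  fixes n :: nat and E :: "(nat \<times> nat) set" and \<alpha> :: "nat \<Rightarrow> nat \<Rightarrow> real"
    and s :: "nat \<Rightarrow> nat" and rstar :: "nat \<Rightarrow> real"
  assumes "n \<ge> 1"
    and "strongly_connected n E"
    and "\<forall>t. s t \<in> {1..n}"
    and "\<forall>v\<in>{1..n}. \<exists>\<^sub>\<infinity>t. s t = v"
    and "\<forall>v\<in>{1..n}. (\<lambda>t. raised E \<alpha> s v t) \<longlonglongrightarrow> rstar v"
  shows "(let y = (\<lambda>v. - rstar v) in Max (y ` {1..n}) - Min (y ` {1..n}))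
           \<le> real (n - 1) * (\<Sum>v\<in>{1..n}. rhoR E \<alpha> v)"
proof (cases "n = 1")
  case True
  then show ?thesis by (simp add: Let_def)
next
  case False
  then interpret raising_process "{1..n}" E \<alpha> s rstar
    using assms(1,2,4,5) finite_digraph_if_strongly_connected
    by (simp add: raising_process_def raising_process_axioms_def)
  have "0 \<le> (\<Sum>v\<in>{1..n}. rhoR E \<alpha> v)" by (simp add: sum_nonneg rhoR_def)
  moreover have "- rstar b - - rstar a \<le> (\<Sum>v\<in>{1..n}. rhoR E \<alpha> v)"
    if "a \<in> {1..n}" "b \<in> {1..n}" "- rstar a < - rstar b"
      "\<forall>c\<in>{1..n}. - rstar c \<le> - rstar a \<or> - rstar b \<le> - rstar c" for a b
    using consecutive_rstar_gap_le_sum_rhoR[of a b] that by auto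
  ultimately show ?thesis
    using Max_minus_Min_le_card_mult_gap[where A = "{1..n}" and f = "\<lambda>v. - rstar v"] assms(1)
    unfolding Let_def by simp
qed

end
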